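(* Let $\pi$ be a probability density and $q$ a positive probability density (with respect to a common reference measure $\mathrm{d}x$) on a space $\mathsf{E}$, and let $w(x):=\pi(x)/q(x)$. Let $P$ be the Independent Metropolis–Hastings kernel \[ P(x,\mathrm{d}y)=\Big[1\wedge\frac{w(y)}{w(x)}\Big]q(y)\,\mathrm{d}y+\rho(x)\delta_{x}(\mathrm{d}y),\qquad\rho(x)=\int\Big[1-1\wedge\frac{w(y)}{w(x)}\Big]q(y)\,\mathrm{d}y, \] and for $s>0$ let $A(s):=\{(x,y)\in\mathsf{E}\times\mathsf{E}:w^{-1}(x)\wedge w^{-1}(y)\ge1/s\}$. Then for every $f\in\mathrm{L}_{0}^{2}(\pi)$ and every $s>0$, \[ \|f\|_{2}^{2}\le s\,\mathcal{E}(P,f)+\frac{\pi\otimes\pi(A(s)^{\complement})}{2}\|f\|_{\mathrm{osc}}^{2}. \]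
   Context: $\|\cdot\|_{2}$ and $\mathrm{L}_{0}^{2}(\pi)$ refer to the probability measure $\pi(x)\mathrm{d}x$; $\mathcal{E}(P,f)=\langle(\mathrm{Id}-P)f,f\rangle_{\mathrm{L}^{2}(\pi)}$; $\|f\|_{\mathrm{osc}}=\operatorname{ess\,sup}f-\operatorname{ess\,inf}f$; $\pi\otimes\pi$ is the product measure on $\mathsf{E}\times\mathsf{E}$. *)

theory Defs
  imports "HOL-Probability.Probability"
begin

definition essinf :: "'a measure \<Rightarrow> ('a \<Rightarrow> ereal) \<Rightarrow> ereal" where
  "essinf M f = - esssup M (\<lambda>x. - f x)"

definition osc_norm :: "'a measure \<Rightarrow> ('a \<Rightarrow> real) \<Rightarrow> ereal" where
  "osc_norm M f = esssup M (\<lambda>x. ereal (f x)) - essinf M (\<lambda>x. ereal (f x))"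

definition imp_weight :: "('a \<Rightarrow> real) \<Rightarrow> ('a \<Rightarrow> real) \<Rightarrow> 'a \<Rightarrow> real" where
  "imp_weight \<pi> q x = \<pi> x / q x"

definition imh_rho :: "'a measure \<Rightarrow> ('a \<Rightarrow> real) \<Rightarrow> ('a \<Rightarrow> real) \<Rightarrow> 'a \<Rightarrow> real" where
  "imh_rho M \<pi> q x =
     (\<integral>y. (1 - min 1 (imp_weight \<pi> q y / imp_weight \<pi> q x)) * q y \<partial>M)"

text \<open>The IMH Markov operator: (P f)(x) = int f(y) P(x,dy).\<close>
definition imh_op :: "'a measure \<Rightarrow> ('a \<Rightarrow> real) \<Rightarrow> ('a \<Rightarrow> real) \<Rightarrow> ('a \<Rightarrow> real) \<Rightarrow> 'a \<Rightarrow> real" where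
  "imh_op M \<pi> q f x =
     (\<integral>y. min 1 (imp_weight \<pi> q y / imp_weight \<pi> q x) * q y * f y \<partial>M)
     + imh_rho M \<pi> q x * f x"

definition pi_measure :: "'a measure \<Rightarrow> ('a \<Rightarrow> real) \<Rightarrow> 'a measure" where
  "pi_measure M \<pi> = density M (\<lambda>x. ennreal (\<pi> x))"

definition imh_dirichlet :: "'a measure \<Rightarrow> ('a \<Rightarrow> real) \<Rightarrow> ('a \<Rightarrow> real) \<Rightarrow> ('a \<Rightarrow> real) \<Rightarrow> real" where
  "imh_dirichlet M \<pi> q f =
     (\<integral>x. (f x - imh_op M \<pi> q f x) * f x \<partial>pi_measure M \<pi>)"

text \<open>A(s) = {(x,y) : w^{-1}(x) min w^{-1}(y) >= 1/s}, with 1/0 = infinity.\<close>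
definition A_set :: "'a measure \<Rightarrow> ('a \<Rightarrow> real) \<Rightarrow> ('a \<Rightarrow> real) \<Rightarrow> real \<Rightarrow> ('a \<times> 'a) set" where
  "A_set M \<pi> q s = {(x, y) \<in> space M \<times> space M.
      min (inverse (ereal (imp_weight \<pi> q x))) (inverse (ereal (imp_weight \<pi> q y))) \<ge> ereal (1 / s)}"

end

theory Submission
  imports Defs
begin

text \<open>
  Multiplying the acceptance probability min 1 (w y / w x) of the independent sampler by the
  weight w x = pi x / q x gives the symmetric kernel min (w x) (w y) (detailed balance), hence
  2 E(P, f) = int int min (w x) (w y) (f x - f y)^2 q(dx) q(dy).
  For f of mean zero, 2 ||f||^2 = int int (f x - f y)^2 pi(dx) pi(dy)
  = int int w x w y (f x - f y)^2 q(dx) q(dy).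
  On A(s) both weights are at most s, so w x w y <= s min (w x) (w y) and that part is at most
  2 s E(P, f); on the complement, (f x - f y)^2 <= ||f||_osc^2 almost everywhere.
\<close>

lemma abs_diff_mult_le: "\<bar>(a - b) * a\<bar> \<le> 2 * a\<^sup>2 + b\<^sup>2" for a b :: real
proof -
  have "\<bar>(a - b) * a\<bar> \<le> (\<bar>a\<bar> + \<bar>b\<bar>) * \<bar>a\<bar>"
    unfolding abs_mult by (rule mult_right_mono) (auto simp: abs_triangle_ineq4)
  also have "\<dots> = a\<^sup>2 + \<bar>a\<bar> * \<bar>b\<bar>"
    by (simp add: algebra_simps power2_eq_square)
  finally have "\<bar>(a - b) * a\<bar> \<le> a\<^sup>2 + \<bar>a\<bar> * \<bar>b\<bar>" .
  moreover have "2 * (\<bar>a\<bar> * \<bar>b\<bar>) \<le> a\<^sup>2 + b\<^sup>2"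
    using sum_squares_bound[of "\<bar>a\<bar>" "\<bar>b\<bar>"] by (simp add: mult.assoc)
  ultimately show ?thesis
    using zero_le_power2[of a] zero_le_power2[of b] by linarith
qed

lemma ereal_mult_half: "ereal c * x / 2 = ereal (c / 2) * x"
  by (cases x) auto

lemma integral_eq_set_integral_add_compl:
  fixes g :: "'a \<Rightarrow> real"
  assumes "integrable M g" "A \<in> sets M"
  shows "integral\<^sup>L M g = (\<integral>x\<in>A. g x \<partial>M) + (\<integral>x\<in>space M - A. g x \<partial>M)"
proof -
  have "integrable M (\<lambda>x. indicator B x * g x)" if "B \<in> sets M" for B
    using integrable_mult_indicator[OF that assms(1)] by simp
  then have "(\<integral>x. indicator A x * g x + indicator (space M - A) x * g x \<partial>M)
      = (\<integral>x\<in>A. g x \<partial>M) + (\<integral>x\<in>space M - A. g x \<partial>M)"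
    using assms(2) unfolding set_lebesgue_integral_def by simp
  moreover have "integral\<^sup>L M g = (\<integral>x. indicator A x * g x + indicator (space M - A) x * g x \<partial>M)"
    by (rule Bochner_Integration.integral_cong) (auto split: split_indicator)
  ultimately show ?thesis
    by simp
qed

lemma prob_space_density:
  assumes [measurable]: "g \<in> borel_measurable M" and "(\<integral>\<^sup>+ x. ennreal (g x) \<partial>M) = 1"
  shows "prob_space (density M (\<lambda>x. ennreal (g x)))"
proof
  have "emeasure (density M (\<lambda>x. ennreal (g x))) (space M) = (\<integral>\<^sup>+ x. ennreal (g x) \<partial>M)"
    by (auto simp: emeasure_density intro!: nn_integral_cong)
  then show "emeasure (density M (\<lambda>x. ennreal (g x))) (space (density M (\<lambda>x. ennreal (g x)))) = 1"
    using assms(2) by simp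
qed

lemma integrable_comp_fst:
  fixes h :: "'a \<Rightarrow> real"
  assumes "prob_space M2" "integrable M1 h"
  shows "integrable (M1 \<Otimes>\<^sub>M M2) (\<lambda>z. h (fst z))"
proof -
  interpret M2: prob_space M2 by fact
  have [measurable]: "h \<in> borel_measurable M1" using assms(2) by auto
  have "(\<integral>\<^sup>+ z. ennreal (norm (h (fst z))) \<partial>(M1 \<Otimes>\<^sub>M M2))
      = (\<integral>\<^sup>+ x. \<integral>\<^sup>+ y. ennreal (norm (h x)) \<partial>M2 \<partial>M1)"
    by (subst M2.nn_integral_fst[symmetric]) auto
  also have "\<dots> = (\<integral>\<^sup>+ x. ennreal (norm (h x)) \<partial>M1)"
    by (simp add: M2.emeasure_space_1)
  also have "\<dots> < \<infinity>"
    using assms(2) by (simp add: integrable_iff_bounded)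
  finally show ?thesis
    by (intro integrableI_bounded) auto
qed

lemma integrable_comp_snd:
  fixes h :: "'a \<Rightarrow> real"
  assumes "prob_space M1" "prob_space M2" "integrable M2 h"
  shows "integrable (M1 \<Otimes>\<^sub>M M2) (\<lambda>z. h (snd z))"
proof -
  interpret pair_prob_space M2 M1
    using assms by (simp add: pair_prob_space_def pair_sigma_finite_def prob_space_imp_sigma_finite)
  show ?thesis
    using integrable_product_swap[OF integrable_comp_fst[OF assms(1,3)]] by (simp add: split_beta')
qed

lemma (in prob_space) pair_square_diff:
  fixes f :: "'a \<Rightarrow> real"
  assumes f[measurable]: "f \<in> borel_measurable M" and f2: "integrable M (\<lambda>x. (f x)\<^sup>2)"
  shows integrable_pair_square_diff: "integrable (M \<Otimes>\<^sub>M M) (\<lambda>z. (f (fst z) - f (snd z))\<^sup>2)"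
    and integral_pair_square_diff: "(\<integral>z. (f (fst z) - f (snd z))\<^sup>2 \<partial>(M \<Otimes>\<^sub>M M)) = 2 * variance f"
proof -
  have f1: "integrable M f"
    using f2 by (rule square_integrable_imp_integrable[OF f])
  interpret MM: pair_prob_space M M ..
  have bound: "(a - b)\<^sup>2 \<le> 2 * a\<^sup>2 + 2 * b\<^sup>2" for a b :: real
    using zero_le_power2[of "a + b"] by (simp add: power2_eq_square algebra_simps)
  show int: "integrable (M \<Otimes>\<^sub>M M) (\<lambda>z. (f (fst z) - f (snd z))\<^sup>2)"
  proof (rule Bochner_Integration.integrable_bound)
    show "integrable (M \<Otimes>\<^sub>M M) (\<lambda>z. 2 * (f (fst z))\<^sup>2 + 2 * (f (snd z))\<^sup>2)"
      using integrable_comp_fst[OF prob_space_axioms f2]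
        integrable_comp_snd[OF prob_space_axioms prob_space_axioms f2]
      by auto
  qed (use bound in auto)
  have inner: "(\<integral>y. (f x - f y)\<^sup>2 \<partial>M)
      = (f x)\<^sup>2 - 2 * f x * expectation f + expectation (\<lambda>y. (f y)\<^sup>2)" for x
  proof -
    have "(\<integral>y. (f x - f y)\<^sup>2 \<partial>M) = (\<integral>y. (f x)\<^sup>2 + (f y)\<^sup>2 - 2 * f x * f y \<partial>M)"
      by (simp add: power2_diff)
    also have "\<dots> = (f x)\<^sup>2 - 2 * f x * expectation f + expectation (\<lambda>y. (f y)\<^sup>2)"
      using f1 f2 by (simp add: prob_space)
    finally show ?thesis .
  qed
  have "(\<integral>z. (f (fst z) - f (snd z))\<^sup>2 \<partial>(M \<Otimes>\<^sub>M M)) = (\<integral>x. \<integral>y. (f x - f y)\<^sup>2 \<partial>M \<partial>M)"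
    using MM.integral_fst'[OF int] by simp
  also have "\<dots> = (\<integral>x. (f x)\<^sup>2 - 2 * f x * expectation f + expectation (\<lambda>y. (f y)\<^sup>2) \<partial>M)"
    by (simp only: inner)
  also have "\<dots> = 2 * (expectation (\<lambda>x. (f x)\<^sup>2) - (expectation f)\<^sup>2)"
    using f1 f2 by (simp add: prob_space power2_eq_square)
  also have "\<dots> = 2 * variance f"
    using f1 f2 by (simp add: variance_eq)
  finally show "(\<integral>z. (f (fst z) - f (snd z))\<^sup>2 \<partial>(M \<Otimes>\<^sub>M M)) = 2 * variance f" .
qed

lemma (in prob_space) AE_pair_square_diff_le_osc_norm:
  fixes f :: "'a \<Rightarrow> real"
  assumes [measurable]: "f \<in> borel_measurable M" and osc: "osc_norm M f = ereal c"
  shows "AE z in M \<Otimes>\<^sub>M M. (f (fst z) - f (snd z))\<^sup>2 \<le> c\<^sup>2"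
proof -
  interpret MM: pair_prob_space M M ..
  define S where "S = esssup M (\<lambda>x. ereal (f x))"
  define I where "I = essinf M (\<lambda>x. ereal (f x))"
  have AE_S: "AE x in M. ereal (f x) \<le> S"
    unfolding S_def by (rule esssup_AE)
  have AE_I: "AE x in M. I \<le> ereal (f x)"
    using esssup_AE[of "\<lambda>x. - ereal (f x)" M]
    unfolding I_def essinf_def by (auto simp: ereal_uminus_le_reorder)
  have "S \<noteq> -\<infinity>" "I \<noteq> \<infinity>"
    using AE_S AE_I by auto
  moreover have "S - I = ereal c"
    using osc unfolding osc_norm_def S_def I_def .
  ultimately obtain a b where ab: "S = ereal a" "I = ereal b" and c: "c = a - b"
    by (cases S; cases I) auto
  have bounds: "AE x in M. b \<le> f x \<and> f x \<le> a"
    using AE_S AE_I unfolding ab by auto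
  then have "AE x in M. AE y in M. (f x - f y)\<^sup>2 \<le> c\<^sup>2"
    by eventually_elim (use bounds in \<open>eventually_elim, auto simp: c abs_le_square_iff[symmetric]\<close>)
  then show ?thesis
    by (intro MM.AE_pair_measure) auto
qed

lemma (in prob_space) set_integral_pair_square_diff_le_osc_norm:
  fixes f :: "'a \<Rightarrow> real"
  assumes [measurable]: "f \<in> borel_measurable M" "C \<in> sets (M \<Otimes>\<^sub>M M)"
  shows "ereal (\<integral>z\<in>C. (f (fst z) - f (snd z))\<^sup>2 \<partial>(M \<Otimes>\<^sub>M M))
           \<le> ereal (measure (M \<Otimes>\<^sub>M M) C) * (osc_norm M f)\<^sup>2"
proof -
  interpret MM: pair_prob_space M M ..
  show ?thesis
  proof (cases "(osc_norm M f)\<^sup>2 = \<infinity>")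
    case osc_inf: True
    show ?thesis
    proof (cases "measure (M \<Otimes>\<^sub>M M) C = 0")
      case True
      \<comment> \<open>here the right-hand side is 0 * \<infinity> = 0 in ereal\<close>
      then have "AE z in M \<Otimes>\<^sub>M M. z \<notin> C"
        by (intro AE_I'[of C]) (auto simp: null_sets_def MM.emeasure_eq_measure)
      then have "(\<integral>z\<in>C. (f (fst z) - f (snd z))\<^sup>2 \<partial>(M \<Otimes>\<^sub>M M)) = 0"
        unfolding set_lebesgue_integral_def by (intro integral_eq_zero_AE) auto
      then show ?thesis
        using True by (simp add: zero_ereal_def[symmetric])
    next
      case False
      then show ?thesis
        using osc_inf by (simp add: less_le)
    qed
  next
    case False
    then obtain c where osc: "osc_norm M f = ereal c"
      by (cases "osc_norm M f") auto
    have bound: "AE z in M \<Otimes>\<^sub>M M. (f (fst z) - f (snd z))\<^sup>2 \<le> c\<^sup>2"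
      using assms(1) osc by (rule AE_pair_square_diff_le_osc_norm)
    have "(\<integral>z\<in>C. (f (fst z) - f (snd z))\<^sup>2 \<partial>(M \<Otimes>\<^sub>M M))
          \<le> (\<integral>z. c\<^sup>2 * indicator C z \<partial>(M \<Otimes>\<^sub>M M))"
      unfolding set_lebesgue_integral_def
    proof (rule integral_mono_AE)
      show "integrable (M \<Otimes>\<^sub>M M) (\<lambda>z. indicator C z *\<^sub>R (f (fst z) - f (snd z))\<^sup>2)"
        by (rule MM.integrable_const_bound[where B="c\<^sup>2"])
          (use bound in \<open>auto split: split_indicator\<close>)
      show "integrable (M \<Otimes>\<^sub>M M) (\<lambda>z. c\<^sup>2 * indicator C z)"
        by (rule MM.integrable_const_bound[where B="c\<^sup>2"]) (auto split: split_indicator)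
    qed (use bound in \<open>auto split: split_indicator\<close>)
    also have "\<dots> = c\<^sup>2 * measure (M \<Otimes>\<^sub>M M) C"
      by simp
    finally show ?thesis
      unfolding osc by (simp add: mult.commute)
  qed
qed

lemma sets_pi_measure [simp, measurable_cong]: "sets (pi_measure M \<pi>) = sets M"
  and space_pi_measure [simp]: "space (pi_measure M \<pi>) = space M"
  by (simp_all add: pi_measure_def)

locale imh =
  fixes M :: "'a measure" and \<pi> q :: "'a \<Rightarrow> real"
  assumes \<pi>_measurable [measurable]: "\<pi> \<in> borel_measurable M"
    and \<pi>_nonneg: "\<And>x. x \<in> space M \<Longrightarrow> 0 \<le> \<pi> x"
    and \<pi>_prob: "(\<integral>\<^sup>+ x. ennreal (\<pi> x) \<partial>M) = 1"
    and q_measurable [measurable]: "q \<in> borel_measurable M"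
    and q_pos: "\<And>x. x \<in> space M \<Longrightarrow> 0 < q x"
    and q_prob: "(\<integral>\<^sup>+ x. ennreal (q x) \<partial>M) = 1"
begin

abbreviation w :: "'a \<Rightarrow> real" where
  "w \<equiv> imp_weight \<pi> q"

abbreviation q\<^sub>M :: "'a measure" where
  "q\<^sub>M \<equiv> density M (\<lambda>x. ennreal (q x))"

abbreviation \<pi>\<^sub>M :: "'a measure" where
  "\<pi>\<^sub>M \<equiv> pi_measure M \<pi>"

lemma w_measurable [measurable]: "w \<in> borel_measurable M"
  unfolding imp_weight_def by measurable

lemma w_nonneg: "x \<in> space M \<Longrightarrow> 0 \<le> w x"
  using \<pi>_nonneg[of x] q_pos[of x] by (simp add: imp_weight_def)

lemma q_mult_w: "x \<in> space M \<Longrightarrow> q x * w x = \<pi> x"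
  using q_pos[of x] by (simp add: imp_weight_def)

sublocale q: prob_space q\<^sub>M
  by (rule prob_space_density) (fact q_measurable q_prob)+

sublocale \<pi>: prob_space \<pi>\<^sub>M
  unfolding pi_measure_def by (rule prob_space_density) (fact \<pi>_measurable \<pi>_prob)+

sublocale qq: pair_prob_space q\<^sub>M q\<^sub>M ..

lemma pi_measure_eq_density: "\<pi>\<^sub>M = density q\<^sub>M (\<lambda>x. ennreal (w x))"
proof -
  have "density q\<^sub>M (\<lambda>x. ennreal (w x)) = density M (\<lambda>x. ennreal (q x) * ennreal (w x))"
    by (rule density_density_eq) auto
  also have "\<dots> = density M (\<lambda>x. ennreal (\<pi> x))"
    by (rule density_cong)
      (auto intro!: AE_I2 simp: ennreal_mult[symmetric] q_mult_w w_nonneg q_pos less_imp_le)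
  finally show ?thesis
    unfolding pi_measure_def by simp
qed

lemma integrable_pi_measure_iff:
  assumes [measurable]: "h \<in> borel_measurable M"
  shows "integrable \<pi>\<^sub>M h \<longleftrightarrow> integrable q\<^sub>M (\<lambda>x. w x * h x)"
  unfolding pi_measure_eq_density by (subst integrable_density) (auto intro!: AE_I2 simp: w_nonneg)

lemma integral_pi_measure:
  assumes [measurable]: "h \<in> borel_measurable M"
  shows "integral\<^sup>L \<pi>\<^sub>M h = (\<integral>x. w x * h x \<partial>q\<^sub>M)"
  unfolding pi_measure_eq_density by (subst integral_density) (auto intro!: AE_I2 simp: w_nonneg)

lemma imh_op_eq_integral_q:
  assumes [measurable]: "f \<in> borel_measurable M" and x: "x \<in> space M"
  shows "imh_op M \<pi> q f x
    = (\<integral>y. min 1 (w y / w x) * f y \<partial>q\<^sub>M) + (\<integral>y. 1 - min 1 (w y / w x) \<partial>q\<^sub>M) * f x"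
  unfolding imh_op_def imh_rho_def
  by (subst (1 2) integral_density)
    (auto simp: q_pos less_imp_le ac_simps intro!: Bochner_Integration.integral_cong)

lemma measurable_imh_op [measurable]:
  assumes [measurable]: "f \<in> borel_measurable M"
  shows "imh_op M \<pi> q f \<in> borel_measurable M"
proof -
  have "(\<lambda>x. (\<integral>y. min 1 (w y / w x) * f y \<partial>q\<^sub>M) + (\<integral>y. 1 - min 1 (w y / w x) \<partial>q\<^sub>M) * f x)
      \<in> borel_measurable M"
    by measurable
  then show ?thesis
    by (rule measurable_cong[THEN iffD1, rotated]) (simp add: imh_op_eq_integral_q)
qed

lemma w_mult_diff_imh_op:
  assumes [measurable]: "f \<in> borel_measurable M" and f_int: "integrable \<pi>\<^sub>M f" and x: "x \<in> space M"
  shows "w x * (f x - imh_op M \<pi> q f x) = (\<integral>y. min (w x) (w y) * (f x - f y) \<partial>q\<^sub>M)"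
proof -
  define k where "k = (\<lambda>y. min 1 (w y / w x))"
  have k_bounds: "0 \<le> k y" "k y \<le> 1" if "y \<in> space M" for y
    using w_nonneg[OF x] w_nonneg[OF that] by (auto simp: k_def)
  \<comment> \<open>at w x = 0 the ratio w y / w x is the junk value 0, but it is multiplied away\<close>
  have w_mult_k: "w x * k y = min (w x) (w y)" if "y \<in> space M" for y
    using w_nonneg[OF x] w_nonneg[OF that]
    by (cases "w x = 0") (auto simp: k_def min_def field_simps)
  have [measurable]: "k \<in> borel_measurable M"
    unfolding k_def by measurable
  have int_k: "integrable q\<^sub>M k"
    by (rule q.integrable_const_bound[where B=1]) (use k_bounds in \<open>auto intro!: AE_I2\<close>)
  have int_min: "integrable q\<^sub>M (\<lambda>y. min (w x) (w y))"
    by (rule q.integrable_const_bound[where B="w x"]) (auto simp: w_nonneg x)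
  have int_min_f: "integrable q\<^sub>M (\<lambda>y. min (w x) (w y) * f y)"
  proof (rule Bochner_Integration.integrable_bound)
    show "integrable q\<^sub>M (\<lambda>y. w y * f y)"
      using f_int by (simp add: integrable_pi_measure_iff)
    show "AE y in q\<^sub>M. norm (min (w x) (w y) * f y) \<le> norm (w y * f y)"
      using w_nonneg x by (auto intro!: AE_I2 mult_right_mono simp: abs_mult)
  qed simp
  have op: "imh_op M \<pi> q f x = (\<integral>y. k y * f y \<partial>q\<^sub>M) + (1 - (\<integral>y. k y \<partial>q\<^sub>M)) * f x"
    using int_k by (simp add: imh_op_eq_integral_q x k_def q.prob_space[simplified])
  have "w x * (f x - imh_op M \<pi> q f x)
      = f x * (w x * (\<integral>y. k y \<partial>q\<^sub>M)) - w x * (\<integral>y. k y * f y \<partial>q\<^sub>M)"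
    unfolding op by (simp add: algebra_simps)
  also have "\<dots> = f x * (\<integral>y. min (w x) (w y) \<partial>q\<^sub>M) - (\<integral>y. min (w x) (w y) * f y \<partial>q\<^sub>M)"
  proof -
    have "(\<integral>y. min (w x) (w y) \<partial>q\<^sub>M) = (\<integral>y. w x * k y \<partial>q\<^sub>M)"
      "(\<integral>y. min (w x) (w y) * f y \<partial>q\<^sub>M) = (\<integral>y. w x * (k y * f y) \<partial>q\<^sub>M)"
      by (rule Bochner_Integration.integral_cong; simp add: w_mult_k mult.assoc[symmetric])+
    then show ?thesis
      by simp
  qed
  also have "\<dots> = (\<integral>y. f x * min (w x) (w y) - min (w x) (w y) * f y \<partial>q\<^sub>M)"
    using int_min int_min_f by (subst Bochner_Integration.integral_diff) auto
  also have "\<dots> = (\<integral>y. min (w x) (w y) * (f x - f y) \<partial>q\<^sub>M)"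
    by (simp add: algebra_simps)
  finally show ?thesis .
qed

lemma imh_dirichlet_eq_pair_integral:
  assumes [measurable]: "f \<in> borel_measurable M" and f2: "integrable \<pi>\<^sub>M (\<lambda>x. (f x)\<^sup>2)"
  shows integrable_imh_dirichlet_integrand:
      "integrable (q\<^sub>M \<Otimes>\<^sub>M q\<^sub>M) (\<lambda>(x, y). min (w x) (w y) * (f x - f y) * f x)"
    and "imh_dirichlet M \<pi> q f = (\<integral>(x, y). min (w x) (w y) * (f x - f y) * f x \<partial>(q\<^sub>M \<Otimes>\<^sub>M q\<^sub>M))"
proof -
  have f1: "integrable \<pi>\<^sub>M f"
    by (rule \<pi>.square_integrable_imp_integrable[OF _ f2]) measurable
  have wf2: "integrable q\<^sub>M (\<lambda>x. w x * (f x)\<^sup>2)"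
    using f2 integrable_pi_measure_iff[of "\<lambda>x. (f x)\<^sup>2"] by (simp add: borel_measurable_power)
  have bound: "\<bar>min (w x) (w y) * (f x - f y) * f x\<bar> \<le> 2 * (w x * (f x)\<^sup>2) + w y * (f y)\<^sup>2"
    if "x \<in> space M" "y \<in> space M" for x y
  proof -
    have m: "0 \<le> min (w x) (w y)" "min (w x) (w y) \<le> w x" "min (w x) (w y) \<le> w y"
      using w_nonneg that by auto
    have "\<bar>min (w x) (w y) * (f x - f y) * f x\<bar> = min (w x) (w y) * \<bar>(f x - f y) * f x\<bar>"
      using m(1) by (simp add: abs_mult)
    also have "\<dots> \<le> min (w x) (w y) * (2 * (f x)\<^sup>2 + (f y)\<^sup>2)"
      using abs_diff_mult_le m(1) by (rule mult_left_mono)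
    also have "\<dots> = 2 * (min (w x) (w y) * (f x)\<^sup>2) + min (w x) (w y) * (f y)\<^sup>2"
      by (simp add: algebra_simps)
    also have "\<dots> \<le> 2 * (w x * (f x)\<^sup>2) + w y * (f y)\<^sup>2"
      using m by (intro add_mono mult_left_mono mult_right_mono) auto
    finally show ?thesis .
  qed
  show int: "integrable (q\<^sub>M \<Otimes>\<^sub>M q\<^sub>M) (\<lambda>(x, y). min (w x) (w y) * (f x - f y) * f x)"
  proof (rule Bochner_Integration.integrable_bound)
    show "integrable (q\<^sub>M \<Otimes>\<^sub>M q\<^sub>M)
        (\<lambda>z. 2 * (w (fst z) * (f (fst z))\<^sup>2) + w (snd z) * (f (snd z))\<^sup>2)"
      using integrable_comp_fst[OF q.prob_space_axioms wf2]
        integrable_comp_snd[OF q.prob_space_axioms q.prob_space_axioms wf2]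
      by auto
    show "AE z in q\<^sub>M \<Otimes>\<^sub>M q\<^sub>M. norm (case z of (x, y) \<Rightarrow> min (w x) (w y) * (f x - f y) * f x)
        \<le> norm (2 * (w (fst z) * (f (fst z))\<^sup>2) + w (snd z) * (f (snd z))\<^sup>2)"
      by (rule AE_I2) (use bound w_nonneg in \<open>auto simp: space_pair_measure\<close>)
  qed measurable
  have "imh_dirichlet M \<pi> q f = (\<integral>x. w x * ((f x - imh_op M \<pi> q f x) * f x) \<partial>q\<^sub>M)"
    unfolding imh_dirichlet_def by (rule integral_pi_measure) measurable
  also have "\<dots> = (\<integral>x. \<integral>y. min (w x) (w y) * (f x - f y) * f x \<partial>q\<^sub>M \<partial>q\<^sub>M)"
    using f1
    by (auto simp: w_mult_diff_imh_op mult.assoc[symmetric] intro!: Bochner_Integration.integral_cong)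
  also have "\<dots> = (\<integral>(x, y). min (w x) (w y) * (f x - f y) * f x \<partial>(q\<^sub>M \<Otimes>\<^sub>M q\<^sub>M))"
    using qq.integral_fst'[OF int] by simp
  finally show "imh_dirichlet M \<pi> q f
      = (\<integral>(x, y). min (w x) (w y) * (f x - f y) * f x \<partial>(q\<^sub>M \<Otimes>\<^sub>M q\<^sub>M))" .
qed

lemma imh_dirichlet_symmetric:
  assumes [measurable]: "f \<in> borel_measurable M" and f2: "integrable \<pi>\<^sub>M (\<lambda>x. (f x)\<^sup>2)"
  shows integrable_imh_dirichlet_symmetric:
      "integrable (q\<^sub>M \<Otimes>\<^sub>M q\<^sub>M) (\<lambda>(x, y). min (w x) (w y) * (f x - f y)\<^sup>2)"
    and "2 * imh_dirichlet M \<pi> q f = (\<integral>(x, y). min (w x) (w y) * (f x - f y)\<^sup>2 \<partial>(q\<^sub>M \<Otimes>\<^sub>M q\<^sub>M))"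
proof -
  let ?F = "\<lambda>(x, y). min (w x) (w y) * (f x - f y) * f x"
  have sym: "(\<lambda>(x, y). min (w x) (w y) * (f x - f y)\<^sup>2) = (\<lambda>(x, y). ?F (x, y) + ?F (y, x))"
    by (auto simp: fun_eq_iff min.commute power2_eq_square algebra_simps)
  have int: "integrable (q\<^sub>M \<Otimes>\<^sub>M q\<^sub>M) ?F"
    by (rule integrable_imh_dirichlet_integrand) fact+
  have int_swap: "integrable (q\<^sub>M \<Otimes>\<^sub>M q\<^sub>M) (\<lambda>(x, y). ?F (y, x))"
    using qq.integrable_product_swap[OF int] .
  show "integrable (q\<^sub>M \<Otimes>\<^sub>M q\<^sub>M) (\<lambda>(x, y). min (w x) (w y) * (f x - f y)\<^sup>2)"
    unfolding sym using Bochner_Integration.integrable_add[OF int int_swap]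
    by (simp add: split_beta')
  have "(\<integral>(x, y). ?F (y, x) \<partial>(q\<^sub>M \<Otimes>\<^sub>M q\<^sub>M)) = integral\<^sup>L (q\<^sub>M \<Otimes>\<^sub>M q\<^sub>M) ?F"
    by (rule qq.integral_product_swap) measurable
  then show "2 * imh_dirichlet M \<pi> q f = (\<integral>(x, y). min (w x) (w y) * (f x - f y)\<^sup>2 \<partial>(q\<^sub>M \<Otimes>\<^sub>M q\<^sub>M))"
    unfolding sym using int int_swap imh_dirichlet_eq_pair_integral[OF assms]
    by (simp add: split_beta')
qed

lemma A_set_eq:
  assumes "0 < s"
  shows "A_set M \<pi> q s = {(x, y) \<in> space M \<times> space M. w x \<le> s \<and> w y \<le> s}"
proof -
  have "ereal (1 / s) \<le> inverse (ereal a) \<longleftrightarrow> a \<le> s" if "0 \<le> a" for a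
    using that assms by (cases "a = 0") (auto simp: field_simps)
  then show ?thesis
    unfolding A_set_def by (auto simp: w_nonneg simp del: inverse_ereal.simps)
qed

lemma pair_pi_measure_eq_density:
  "\<pi>\<^sub>M \<Otimes>\<^sub>M \<pi>\<^sub>M = density (q\<^sub>M \<Otimes>\<^sub>M q\<^sub>M) (\<lambda>z. ennreal (w (fst z) * w (snd z)))"
proof -
  have "\<pi>\<^sub>M \<Otimes>\<^sub>M \<pi>\<^sub>M = density (q\<^sub>M \<Otimes>\<^sub>M q\<^sub>M) (\<lambda>(x, y). ennreal (w x) * ennreal (w y))"
    unfolding pi_measure_eq_density
    by (rule pair_measure_density)
      (auto simp: pi_measure_eq_density[symmetric] q.sigma_finite_measure_axioms
        \<pi>.sigma_finite_measure_axioms)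
  also have "\<dots> = density (q\<^sub>M \<Otimes>\<^sub>M q\<^sub>M) (\<lambda>z. ennreal (w (fst z) * w (snd z)))"
    by (rule density_cong) (auto simp: space_pair_measure w_nonneg ennreal_mult)
  finally show ?thesis .
qed

lemma sets_A_set:
  assumes "0 < s"
  shows "A_set M \<pi> q s \<in> sets (M \<Otimes>\<^sub>M M)"
proof -
  have "A_set M \<pi> q s = {z \<in> space (M \<Otimes>\<^sub>M M). w (fst z) \<le> s \<and> w (snd z) \<le> s}"
    by (auto simp: A_set_eq[OF assms] space_pair_measure)
  also have "\<dots> \<in> sets (M \<Otimes>\<^sub>M M)"
    by measurable
  finally show ?thesis .
qed

lemma set_integral_A_set_le_imh_dirichlet:
  assumes [measurable]: "f \<in> borel_measurable M" and f2: "integrable \<pi>\<^sub>M (\<lambda>x. (f x)\<^sup>2)"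
    and s: "0 < s"
  shows "(\<integral>z\<in>A_set M \<pi> q s. (f (fst z) - f (snd z))\<^sup>2 \<partial>(\<pi>\<^sub>M \<Otimes>\<^sub>M \<pi>\<^sub>M))
           \<le> 2 * s * imh_dirichlet M \<pi> q f"
proof -
  let ?A = "A_set M \<pi> q s"
  have [measurable]: "?A \<in> sets (q\<^sub>M \<Otimes>\<^sub>M q\<^sub>M)"
    using sets_A_set[OF s] by (simp add: sets_pair_measure_cong[OF sets_density sets_density])
  have weights_le: "a * b * c \<le> s * (min a b * c)"
    if "0 \<le> a" "0 \<le> b" "a \<le> s" "b \<le> s" "0 \<le> c" for a b c :: real
  proof -
    have "a * b \<le> s * min a b"
      using that mult_left_mono[of b s a] mult_right_mono[of a s b]
      by (auto simp: min_def mult.commute)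
    then have "a * b * c \<le> s * min a b * c"
      using \<open>0 \<le> c\<close> by (rule mult_right_mono)
    then show ?thesis
      by (simp add: mult.assoc)
  qed
  have "(\<integral>z\<in>?A. (f (fst z) - f (snd z))\<^sup>2 \<partial>(\<pi>\<^sub>M \<Otimes>\<^sub>M \<pi>\<^sub>M))
      = (\<integral>(x, y). w x * w y * (indicator ?A (x, y) * (f x - f y)\<^sup>2) \<partial>(q\<^sub>M \<Otimes>\<^sub>M q\<^sub>M))"
    unfolding set_lebesgue_integral_def pair_pi_measure_eq_density
    by (subst integral_density) (auto intro!: AE_I2 simp: space_pair_measure w_nonneg split_beta')
  also have "\<dots> \<le> (\<integral>(x, y). s * (min (w x) (w y) * (f x - f y)\<^sup>2) \<partial>(q\<^sub>M \<Otimes>\<^sub>M q\<^sub>M))"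
  proof (rule integral_mono')
    show "integrable (q\<^sub>M \<Otimes>\<^sub>M q\<^sub>M) (\<lambda>(x, y). s * (min (w x) (w y) * (f x - f y)\<^sup>2))"
      using integrable_imh_dirichlet_symmetric[OF assms(1,2)] by (simp add: split_beta')
    fix z
    assume "z \<in> space (q\<^sub>M \<Otimes>\<^sub>M q\<^sub>M)"
    then obtain x y where z: "z = (x, y)" "x \<in> space M" "y \<in> space M"
      by (auto simp: space_pair_measure)
    show "(case z of (x, y) \<Rightarrow> w x * w y * (indicator ?A (x, y) * (f x - f y)\<^sup>2))
        \<le> (case z of (x, y) \<Rightarrow> s * (min (w x) (w y) * (f x - f y)\<^sup>2))"
      using z w_nonneg s by (auto intro: weights_le simp: A_set_eq split: split_indicator)
    show "0 \<le> (case z of (x, y) \<Rightarrow> s * (min (w x) (w y) * (f x - f y)\<^sup>2))"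
      using z w_nonneg s by simp
  qed
  also have "\<dots> = 2 * s * imh_dirichlet M \<pi> q f"
    using imh_dirichlet_symmetric(2)[OF assms(1,2)] by (simp add: split_beta')
  finally show ?thesis .
qed

end

theorem proposition25:
  fixes M :: "'a measure" and \<pi> q f :: "'a \<Rightarrow> real" and s :: real
  assumes \<pi>_meas: "\<pi> \<in> borel_measurable M"
    and \<pi>_nonneg: "\<And>x. x \<in> space M \<Longrightarrow> 0 \<le> \<pi> x"
    and \<pi>_prob: "(\<integral>\<^sup>+ x. ennreal (\<pi> x) \<partial>M) = 1"
    and q_meas: "q \<in> borel_measurable M"
    and q_pos: "\<And>x. x \<in> space M \<Longrightarrow> 0 < q x"
    and q_prob: "(\<integral>\<^sup>+ x. ennreal (q x) \<partial>M) = 1"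
    and f_meas: "f \<in> borel_measurable M"
    and f_L2: "integrable (pi_measure M \<pi>) (\<lambda>x. (f x)\<^sup>2)"
    and f_mean0: "(\<integral>x. f x \<partial>pi_measure M \<pi>) = 0"
    and s_pos: "0 < s"
  shows "ereal (\<integral>x. (f x)\<^sup>2 \<partial>pi_measure M \<pi>)
           \<le> ereal (s * imh_dirichlet M \<pi> q f)
             + ereal (measure (pi_measure M \<pi> \<Otimes>\<^sub>M pi_measure M \<pi>)
                        (space M \<times> space M - A_set M \<pi> q s) / 2)
               * (osc_norm (pi_measure M \<pi>) f)\<^sup>2"
proof -
  interpret imh M \<pi> q
    using \<pi>_meas \<pi>_nonneg \<pi>_prob q_meas q_pos q_prob by unfold_locales
  let ?g = "\<lambda>z. (f (fst z) - f (snd z))\<^sup>2"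
  let ?Ac = "space M \<times> space M - A_set M \<pi> q s"
  have f_meas_\<pi>: "f \<in> borel_measurable \<pi>\<^sub>M"
    using f_meas by simp
  have Ac_sets: "?Ac \<in> sets (\<pi>\<^sub>M \<Otimes>\<^sub>M \<pi>\<^sub>M)"
    using sets.compl_sets[OF sets_A_set[OF s_pos]]
    by (simp add: space_pair_measure sets_pair_measure_cong[OF sets_pi_measure sets_pi_measure])
  have "2 * (\<integral>x. (f x)\<^sup>2 \<partial>\<pi>\<^sub>M) = (\<integral>z. ?g z \<partial>(\<pi>\<^sub>M \<Otimes>\<^sub>M \<pi>\<^sub>M))"
    using \<pi>.integral_pair_square_diff[OF f_meas_\<pi> f_L2] f_mean0 by (simp add: \<pi>.variance_mean_zero)
  also have "\<dots> = (\<integral>z\<in>A_set M \<pi> q s. ?g z \<partial>(\<pi>\<^sub>M \<Otimes>\<^sub>M \<pi>\<^sub>M)) + (\<integral>z\<in>?Ac. ?g z \<partial>(\<pi>\<^sub>M \<Otimes>\<^sub>M \<pi>\<^sub>M))"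
    using integral_eq_set_integral_add_compl[OF \<pi>.integrable_pair_square_diff[OF f_meas_\<pi> f_L2]]
      sets_A_set[OF s_pos]
    by (simp add: space_pair_measure)
  also have "\<dots> \<le> 2 * s * imh_dirichlet M \<pi> q f + (\<integral>z\<in>?Ac. ?g z \<partial>(\<pi>\<^sub>M \<Otimes>\<^sub>M \<pi>\<^sub>M))"
    using set_integral_A_set_le_imh_dirichlet[OF f_meas f_L2 s_pos] by simp
  finally have "ereal (\<integral>x. (f x)\<^sup>2 \<partial>\<pi>\<^sub>M)
      \<le> ereal (s * imh_dirichlet M \<pi> q f) + ereal (\<integral>z\<in>?Ac. ?g z \<partial>(\<pi>\<^sub>M \<Otimes>\<^sub>M \<pi>\<^sub>M)) / 2"
    by simp
  also have "\<dots> \<le> ereal (s * imh_dirichlet M \<pi> q f)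
      + ereal (measure (\<pi>\<^sub>M \<Otimes>\<^sub>M \<pi>\<^sub>M) ?Ac) * (osc_norm \<pi>\<^sub>M f)\<^sup>2 / 2"
    using \<pi>.set_integral_pair_square_diff_le_osc_norm[OF f_meas_\<pi> Ac_sets]
    by (intro add_left_mono ereal_divide_right_mono) auto
  finally show ?thesis
    by (simp only: ereal_mult_half)
qed

end
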